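(* Let $1\le k\le n$ and let $\mathcal{C}$ be any linear storage code (with any sub-packetization $\alpha\ge 1$ and generator matrix of rank $k\alpha$) on a storage network with node set $\mathcal{N}=\{1,\dots,n\}$ and symmetric round-trip-time function $\tau$. Then for every node $i\in\mathcal{N}$, \[ L_{max}^{(i)}(\mathcal{C}) \ge \lambda_{k-1}^{(i)}, \] and the average latency satisfies \[ L_{avg}(\mathcal{C}) \ge \frac{1}{kn}\sum_{i\in\mathcal{N}}\sum_{j=0}^{k-1}\lambda_{j}^{(i)}. \]
   Context: A storage network consists of $n$ nodes $\mathcal{N}=\{1,\dots,n\}$ and a round-trip-time (RTT) function $\tau:\mathcal{N}\times\mathcal{N}\to\mathbb{R}_{\ge 0}$ with $\tau(i,j)=\tau(j,i)$ and $\tau(i,i)=0$. There are $k\le n$ information files $W_1,\dots,W_k$, each consisting of $\alpha$ sub-packets in a finite field $\mathcal{F}$; node $i$ stores $X_i\in\mathcal{F}^\alpha$. A linear storage code $\mathcal{C}$ is given by a $(k\alpha\times n\alpha)$ matrix $G$ over $\mathcal{F}$ of rank $k\alpha$ with $\underline{X}^T=\underline{W}^T G$, where $\underline{X}$ and $\underline{W}$ are the concatenations of all sub-packets of $X_1,\dots,X_n$ and $W_1,\dots,W_k$. File $W_j$ is decodable from a set $S\subseteq\mathcal{N}$ if there is a function $\varphi$ with $\varphi((X_t)_{t\in S})=W_j$ for all choices of the files. The latency of node $i$ for file $W_j$ is $l_j^{(i)}=\min\{L\ge 0: W_j \text{ is decodable from } \{t\in\mathcal{N}:\tau(t,i)\le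 L\}\}$. The per-node worst-case latency is $L_{max}^{(i)}(\mathcal{C})=\max_{j\in[k]} l_j^{(i)}$ and the average latency is $L_{avg}(\mathcal{C})=\frac{1}{kn}\sum_{i\in\mathcal{N}}\sum_{j\in[k]} l_j^{(i)}$. For node $i$, $\lambda_0^{(i)}\le\lambda_1^{(i)}\le\dots\le\lambda_{n-1}^{(i)}$ denotes the multiset $\{\tau(j,i):j\in\mathcal{N}\}$ sorted in ascending order (so $\lambda_0^{(i)}=0$). *)

theory Defs
  imports "Jordan_Normal_Form.DL_Rank"
begin

text \<open>Nodes are 1..n, files are 1..k, sub-packets are indexed 0..alpha-1.
  The file vector W (concatenation of W_1,...,W_k) has length k*alpha, entry (j-1)*alpha+b
  being sub-packet b of file W_j.  The generator matrix G is (k*alpha) x (n*alpha), and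
  X^T = W^T G, so sub-packet a of node t is W dot (column (t-1)*alpha+a of G).\<close>

definition node_content :: "'f::field mat \<Rightarrow> nat \<Rightarrow> 'f vec \<Rightarrow> nat \<Rightarrow> 'f vec" where
  "node_content G \<alpha> W t = vec \<alpha> (\<lambda>a. W \<bullet> col G ((t - 1) * \<alpha> + a))"

definition file_content :: "nat \<Rightarrow> 'f::field vec \<Rightarrow> nat \<Rightarrow> 'f vec" where
  "file_content \<alpha> W j = vec \<alpha> (\<lambda>b. W $ ((j - 1) * \<alpha> + b))"

definition decodable :: "'f::field mat \<Rightarrow> nat \<Rightarrow> nat \<Rightarrow> nat \<Rightarrow> nat set \<Rightarrow> bool" where
  "decodable G k \<alpha> j S \<longleftrightarrow>
     (\<exists>\<phi> :: (nat \<Rightarrow> 'f vec) \<Rightarrow> 'f vec.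
        \<forall>W \<in> carrier_vec (k * \<alpha>).
          \<phi> (\<lambda>t. if t \<in> S then node_content G \<alpha> W t else 0\<^sub>v \<alpha>) = file_content \<alpha> W j)"

definition latency :: "'f::field mat \<Rightarrow> nat \<Rightarrow> nat \<Rightarrow> nat \<Rightarrow> (nat \<Rightarrow> nat \<Rightarrow> real) \<Rightarrow> nat \<Rightarrow> nat \<Rightarrow> real" where
  "latency G n k \<alpha> \<tau> j i =
     (LEAST L::real. L \<ge> 0 \<and> decodable G k \<alpha> j {t \<in> {1..n}. \<tau> t i \<le> L})"

definition L_max :: "'f::field mat \<Rightarrow> nat \<Rightarrow> nat \<Rightarrow> nat \<Rightarrow> (nat \<Rightarrow> nat \<Rightarrow> real) \<Rightarrow> nat \<Rightarrow> real" where
  "L_max G n k \<alpha> \<tau> i = Max ((\<lambda>j. latency G n k \<alpha> \<tau> j i) ` {1..k})"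

definition L_avg :: "'f::field mat \<Rightarrow> nat \<Rightarrow> nat \<Rightarrow> nat \<Rightarrow> (nat \<Rightarrow> nat \<Rightarrow> real) \<Rightarrow> real" where
  "L_avg G n k \<alpha> \<tau> =
     (1 / (real k * real n)) * (\<Sum>i\<in>{1..n}. \<Sum>j\<in>{1..k}. latency G n k \<alpha> \<tau> j i)"

definition lam :: "nat \<Rightarrow> (nat \<Rightarrow> nat \<Rightarrow> real) \<Rightarrow> nat \<Rightarrow> nat \<Rightarrow> real" where
  "lam n \<tau> i j = sort (map (\<lambda>t. \<tau> t i) [1..<n+1]) ! j"

end

theory Submission
  imports Defs "Berlekamp_Zassenhaus.Berlekamp_Type_Based"
begin

text \<open>If the files in a set J are all decodable from the nodes in S, then the contents of
  those files, which range over all of (F^\<alpha>)^J, are a function of the contents of the nodes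
  in S, which range over a subset of (F^\<alpha>)^S; over a finite field this forces |J| \<le> |S|.
  Taking for S the nodes within round-trip time L of node i shows that at most
  |{t. \<tau>(t,i) \<le> L}| files have latency at most L at node i.  Comparing order statistics,
  the m-th smallest latency of node i is at least \<lambda>_m^(i); the case m = k - 1 bounds the
  worst-case latency and summing over m < k bounds the average.  Latencies are attained
  minima because only the finitely many values \<tau>(t,i) matter as thresholds, and full rank
  of G makes every file decodable from all nodes.\<close>

lemma sorted_nth_le_iff_less_length_filter:
  fixes ys :: "'a::linorder list"
  assumes "sorted ys" and "m < length ys"
  shows "ys ! m \<le> L \<longleftrightarrow> m < length (filter (\<lambda>x. x \<le> L) ys)"
  using assms
proof (induction ys arbitrary: m)
  case Nil
  then show ?case by simp
next
  case (Cons y ys)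
  show ?case
  proof (cases "y \<le> L")
    case True
    with Cons show ?thesis by (cases m) auto
  next
    case False
    with Cons.prems(1) have none: "\<forall>x\<in>set (y # ys). \<not> x \<le> L" by auto
    then have "filter (\<lambda>x. x \<le> L) (y # ys) = []" by (simp add: filter_empty_conv)
    moreover have "\<not> (y # ys) ! m \<le> L" using none nth_mem[OF Cons.prems(2)] by blast
    ultimately show ?thesis by simp
  qed
qed

lemma nth_sort_le_iff:
  fixes xs :: "'a::linorder list"
  assumes "m < length xs"
  shows "sort xs ! m \<le> L \<longleftrightarrow> m < length (filter (\<lambda>x. x \<le> L) xs)"
  using sorted_nth_le_iff_less_length_filter[of "sort xs" m L] assms
  by (simp add: filter_sort)

lemma nth_sort_mono:
  fixes xs ys :: "'a::linorder list"
  assumes count: "\<And>L. length (filter (\<lambda>x. x \<le> L) ys) \<le> length (filter (\<lambda>x. x \<le> L) xs)"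
    and m: "m < length ys"
  shows "sort xs ! m \<le> sort ys ! m"
proof -
  let ?L = "sort ys ! m"
  have "m < length (filter (\<lambda>x. x \<le> ?L) ys)" using nth_sort_le_iff[OF m, of ?L] by simp
  also have "\<dots> \<le> length (filter (\<lambda>x. x \<le> ?L) xs)" by (rule count)
  finally have "m < length (filter (\<lambda>x. x \<le> ?L) xs)" .
  moreover from this have "m < length xs" using length_filter_le order.strict_trans2 by blast
  ultimately show ?thesis using nth_sort_le_iff by blast
qed

lemma sum_nth_sort_le_sum_list:
  fixes xs ys :: "'a::{linorder, ordered_comm_monoid_add} list"
  assumes "\<And>L. length (filter (\<lambda>x. x \<le> L) ys) \<le> length (filter (\<lambda>x. x \<le> L) xs)"
  shows "(\<Sum>m<length ys. sort xs ! m) \<le> sum_list ys"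
proof -
  have "(\<Sum>m<length ys. sort xs ! m) \<le> (\<Sum>m<length ys. sort ys ! m)"
    using nth_sort_mono[OF assms] by (intro sum_mono) simp
  also have "\<dots> = sum_list (sort ys)" by (simp add: sum_list_sum_nth atLeast0LessThan)
  also have "\<dots> = sum_list ys" by (metis mset_sort sum_mset_sum_list)
  finally show ?thesis .
qed

lemma length_filter_map_upt:
  "length (filter P (map f [1..<n+1])) = card {t\<in>{1..n}. P (f t)}"
proof -
  have "length (filter P (map f [1..<n+1])) = card ({t. P (f t)} \<inter> set [1..<n+1])"
    by (simp add: filter_map distinct_length_filter comp_def)
  also have "\<dots> = card {t\<in>{1..n}. P (f t)}" by (intro arg_cong[where f=card]) auto
  finally show ?thesis .
qed

lemma LeastI_finite_witnesses:
  fixes Q :: "'a::linorder \<Rightarrow> bool"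
  assumes V: "finite V" and "Q x" and witness: "\<And>x. Q x \<Longrightarrow> \<exists>v\<in>V. v \<le> x \<and> Q v"
  shows "Q (LEAST x. Q x)"
proof -
  let ?C = "{v\<in>V. Q v}"
  have "?C \<noteq> {}" using witness[OF \<open>Q x\<close>] by blast
  then have min: "Min ?C \<in> ?C" using V by (intro Min_in) auto
  have le: "Min ?C \<le> y" if y: "Q y" for y
  proof -
    obtain v where "v \<in> V" "v \<le> y" "Q v" using witness[OF y] by blast
    then have "Min ?C \<le> v" using V by (intro Min_le) auto
    with \<open>v \<le> y\<close> show ?thesis by simp
  qed
  have "(LEAST x. Q x) = Min ?C" using min le by (intro Least_equality) auto
  with min show ?thesis by simp
qed

lemma threshold_LeastI:
  fixes f :: "'a \<Rightarrow> 'b::{linorder,zero}"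
  assumes A: "finite A" and "D A"
  shows "D {t\<in>A. f t \<le> (LEAST L. 0 \<le> L \<and> D {t\<in>A. f t \<le> L})}"
proof -
  let ?Q = "\<lambda>L. 0 \<le> L \<and> D {t\<in>A. f t \<le> L}"
  let ?V = "insert 0 (f ` A)"
  have "?Q (LEAST L. ?Q L)"
  proof (rule LeastI_finite_witnesses)
    show "finite ?V" using A by simp
    have "{t\<in>A. f t \<le> Max ?V} = A" using A by auto
    then show "?Q (Max ?V)" using A \<open>D A\<close> by simp
  next
    fix L assume "?Q L"
    define v where "v = Max (insert 0 (f ` {t\<in>A. f t \<le> L}))"
    have fin: "finite (insert 0 (f ` {t\<in>A. f t \<le> L}))" using A by simp
    have vV: "v \<in> ?V" unfolding v_def using Max_in[OF fin] by auto
    have vL: "v \<le> L" unfolding v_def using fin \<open>?Q L\<close> by (intro Max.boundedI) auto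
    have v0: "0 \<le> v" unfolding v_def using fin by simp
    have "f t \<le> v \<longleftrightarrow> f t \<le> L" if "t \<in> A" for t
      using vL order.trans[of "f t" v L] Max_ge[OF fin, of "f t"] that unfolding v_def by auto
    then have "{t\<in>A. f t \<le> v} = {t\<in>A. f t \<le> L}" by auto
    then show "\<exists>v\<in>?V. v \<le> L \<and> ?Q v" using vV vL v0 \<open>?Q L\<close> by (intro bexI[of _ v]) simp_all
  qed
  then show ?thesis by (rule conjunct2)
qed

lemma (in vec_space) span_cols_full_rank:
  assumes A: "A \<in> carrier_mat n nc" and r: "rank A = n"
  shows "span (set (cols A)) = carrier_vec n"
proof -
  let ?P = "\<lambda>T. T \<subseteq> set (cols A) \<and> lin_indpt T"
  have "lin_indpt {}"
    by (metis (no_types) empty_subsetI fin_dim finite_basis_exists subset_li_is_li basis_def)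
  then obtain U where U: "finite U" "maximal U ?P"
    using maximal_exists_superset[of "set (cols A)" ?P "{}"] by auto
  then have U_cols: "U \<subseteq> set (cols A)" and "lin_indpt U" and "card U = n"
    using rank_card_indpt[OF A U(2)] r unfolding maximal_def by auto
  moreover have cols: "set (cols A) \<subseteq> carrier_vec n" using A cols_dim by blast
  ultimately have "basis U" using U(1) dim_is_n by (intro dim_li_is_basis) auto
  then have "carrier_vec n \<subseteq> span U" unfolding basis_def by auto
  also have "\<dots> \<subseteq> span (set (cols A))" using span_is_monotone[OF U_cols] .
  finally show ?thesis using cols span_closed by auto
qed

lemma (in vec_space) orthogonal_to_cols_full_rank_eq_0:
  assumes A: "A \<in> carrier_mat n nc" and r: "rank A = n" and w: "w \<in> carrier_vec n"
    and orth: "\<And>c. c < nc \<Longrightarrow> w \<bullet> col A c = 0"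
  shows "w = 0\<^sub>v n"
proof -
  let ?N = "{v \<in> carrier_vec n. w \<bullet> v = 0}"
  have "submodule class_ring ?N V"
    unfolding submodule_def
    using w by (auto simp: module_axioms scalar_prod_add_distrib)
  moreover have "set (cols A) \<subseteq> ?N" using A orth by (auto simp: cols_def)
  ultimately have N: "carrier_vec n \<subseteq> ?N"
    using span_is_subset span_cols_full_rank[OF A r] by metis
  show ?thesis
  proof (rule eq_vecI)
    fix i assume "i < dim_vec (0\<^sub>v n)"
    then have "i < n" by simp
    then have "w \<bullet> unit_vec n i = 0" using N unit_vec_carrier by blast
    then show "w $ i = 0\<^sub>v n $ i" using w \<open>i < n\<close> by (simp add: scalar_prod_right_unit)
  qed (use w in simp)
qed

lemma node_content_inj:
  fixes G :: "'f::field mat"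
  assumes G: "G \<in> carrier_mat (k * \<alpha>) (n * \<alpha>)" and r: "vec_space.rank (k * \<alpha>) G = k * \<alpha>"
    and W: "W \<in> carrier_vec (k * \<alpha>)" and W': "W' \<in> carrier_vec (k * \<alpha>)"
    and eq: "\<And>t. t \<in> {1..n} \<Longrightarrow> node_content G \<alpha> W t = node_content G \<alpha> W' t"
  shows "W = W'"
proof -
  have "(W - W') \<bullet> col G c = 0" if c: "c < n * \<alpha>" for c
  proof -
    define t where "t = c div \<alpha> + 1"
    have "0 < \<alpha>" using c by (cases \<alpha>) auto
    moreover have "c div \<alpha> < n" using c by (simp add: less_mult_imp_div_less)
    ultimately have "t \<in> {1..n}" "c mod \<alpha> < \<alpha>" "(t - 1) * \<alpha> + c mod \<alpha> = c"
      by (auto simp: t_def)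
    then have "W \<bullet> col G c = W' \<bullet> col G c"
      using arg_cong[OF eq, of t "\<lambda>x. x $ (c mod \<alpha>)"] unfolding node_content_def by simp
    moreover have "col G c \<in> carrier_vec (k * \<alpha>)" using G c by simp
    ultimately show ?thesis using W W' by (simp add: minus_scalar_prod_distrib)
  qed
  then have "W - W' = 0\<^sub>v (k * \<alpha>)"
    using W W' by (intro vec_space.orthogonal_to_cols_full_rank_eq_0[OF G r]) auto
  then show ?thesis using W W' by (metis carrier_vecD eq_vecI index_minus_vec index_zero_vec right_minus_eq)
qed

lemma decodable_from_all_nodes:
  fixes G :: "'f::field mat"
  assumes G: "G \<in> carrier_mat (k * \<alpha>) (n * \<alpha>)" and r: "vec_space.rank (k * \<alpha>) G = k * \<alpha>"
  shows "decodable G k \<alpha> j {1..n}"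
proof -
  let ?C = "carrier_vec (k * \<alpha>) :: 'f vec set"
  let ?g = "\<lambda>W t. if t \<in> {1..n} then node_content G \<alpha> W t else 0\<^sub>v \<alpha>"
  have inj: "inj_on ?g ?C"
  proof (rule inj_onI)
    fix W W' assume W: "W \<in> ?C" and W': "W' \<in> ?C" and eq: "?g W = ?g W'"
    have "node_content G \<alpha> W t = node_content G \<alpha> W' t" if "t \<in> {1..n}" for t
      using fun_cong[OF eq, of t] that by simp
    then show "W = W'" by (rule node_content_inj[OF G r W W'])
  qed
  show ?thesis unfolding decodable_def
  proof (intro exI[of _ "\<lambda>x. file_content \<alpha> (inv_into ?C ?g x) j"] ballI)
    fix W assume "W \<in> ?C"
    show "file_content \<alpha> (inv_into ?C ?g (?g W)) j = file_content \<alpha> W j"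
      by (simp only: inv_into_f_f[OF inj \<open>W \<in> ?C\<close>])
  qed
qed

lemma decodable_mono:
  fixes G :: "'f::field mat"
  assumes "S \<subseteq> S'" and "decodable G k \<alpha> j S"
  shows "decodable G k \<alpha> j S'"
proof -
  obtain \<phi> :: "(nat \<Rightarrow> 'f vec) \<Rightarrow> 'f vec" where \<phi>: "\<forall>W \<in> carrier_vec (k * \<alpha>).
      \<phi> (\<lambda>t. if t \<in> S then node_content G \<alpha> W t else 0\<^sub>v \<alpha>) = file_content \<alpha> W j"
    using assms(2) unfolding decodable_def by blast
  have "(\<lambda>t. if t \<in> S then (if t \<in> S' then x t else 0\<^sub>v \<alpha>) else 0\<^sub>v \<alpha>)
      = (\<lambda>t. if t \<in> S then x t else 0\<^sub>v \<alpha>)" for x :: "nat \<Rightarrow> 'f vec"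
    using assms(1) by (intro ext) auto
  then show ?thesis
    unfolding decodable_def using \<phi>
    by (intro exI[of _ "\<lambda>x. \<phi> (\<lambda>t. if t \<in> S then x t else 0\<^sub>v \<alpha>)"]) simp
qed

lemma decodable_files_factor_through_nodes:
  fixes G :: "'f::field mat"
  assumes "\<forall>j\<in>J. decodable G k \<alpha> j S"
  obtains \<Psi> where "\<And>W. W \<in> carrier_vec (k * \<alpha>) \<Longrightarrow>
    \<Psi> (restrict (node_content G \<alpha> W) S) = restrict (file_content \<alpha> W) J"
proof -
  obtain \<phi> :: "nat \<Rightarrow> (nat \<Rightarrow> 'f vec) \<Rightarrow> 'f vec" where \<phi>: "\<forall>j\<in>J. \<forall>W\<in>carrier_vec (k * \<alpha>).
      \<phi> j (\<lambda>t. if t \<in> S then node_content G \<alpha> W t else 0\<^sub>v \<alpha>) = file_content \<alpha> W j"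
    using bchoice[OF assms[unfolded decodable_def]] by blast
  let ?pad = "\<lambda>x t. if t \<in> S then x t else 0\<^sub>v \<alpha>"
  have "?pad (restrict (node_content G \<alpha> W) S) = (\<lambda>t. if t \<in> S then node_content G \<alpha> W t else 0\<^sub>v \<alpha>)"
    for W by auto
  then show ?thesis using \<phi> by (intro that[of "\<lambda>x. restrict (\<lambda>j. \<phi> j (?pad x)) J"]) auto
qed

lemma file_content_surj:
  assumes J: "J \<subseteq> {1..k}" and F: "F \<in> J \<rightarrow>\<^sub>E carrier_vec \<alpha>"
  shows "\<exists>W \<in> carrier_vec (k * \<alpha>). restrict (file_content \<alpha> W) J = F"
proof
  define W where "W = vec (k * \<alpha>) (\<lambda>p. F (p div \<alpha> + 1) $ (p mod \<alpha>))"
  show "W \<in> carrier_vec (k * \<alpha>)" by (simp add: W_def)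
  show "restrict (file_content \<alpha> W) J = F"
  proof
    fix j show "restrict (file_content \<alpha> W) J j = F j"
    proof (cases "j \<in> J")
      case True
      then have j: "1 \<le> j" "j \<le> k" and "F j \<in> carrier_vec \<alpha>" using J F by auto
      have "(j - 1) * \<alpha> + b < k * \<alpha>" if "b < \<alpha>" for b
      proof -
        have "(j - 1) * \<alpha> + b < (j - 1) * \<alpha> + \<alpha>" using that by simp
        also have "\<dots> = j * \<alpha>" using j by (cases j) auto
        also have "\<dots> \<le> k * \<alpha>" using j by simp
        finally show ?thesis .
      qed
      then have "file_content \<alpha> W j = F j"
        using \<open>F j \<in> carrier_vec \<alpha>\<close> j by (intro eq_vecI) (auto simp: file_content_def W_def)
      then show ?thesis using True by simp
    next
      case False
      then show ?thesis using F by auto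
    qed
  qed
qed

lemma two_le_card_field: "2 \<le> CARD('f::{field,finite})"
proof -
  have "card {0, 1 :: 'f} = 2" by simp
  then show ?thesis using card_mono[of UNIV "{0, 1 :: 'f}"] by simp
qed

lemma card_decodable_files_le_card_nodes:
  fixes G :: "'f::{field,finite} mat"
  assumes \<alpha>: "1 \<le> \<alpha>" and S: "finite S" and J: "J \<subseteq> {1..k}"
    and dec: "\<forall>j\<in>J. decodable G k \<alpha> j S"
  shows "card J \<le> card S"
proof -
  let ?V = "carrier_vec \<alpha> :: 'f vec set"
  let ?C = "carrier_vec (k * \<alpha>) :: 'f vec set"
  let ?nodes = "\<lambda>W. restrict (node_content G \<alpha> W) S"
  obtain \<Psi> where \<Psi>: "\<And>W. W \<in> ?C \<Longrightarrow> \<Psi> (?nodes W) = restrict (file_content \<alpha> W) J"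
    using decodable_files_factor_through_nodes[OF dec] by blast
  have files: "J \<rightarrow>\<^sub>E ?V \<subseteq> \<Psi> ` ?nodes ` ?C"
  proof
    fix F assume "F \<in> J \<rightarrow>\<^sub>E ?V"
    then obtain W where "W \<in> ?C" "restrict (file_content \<alpha> W) J = F"
      using file_content_surj[OF J] by blast
    then show "F \<in> \<Psi> ` ?nodes ` ?C" using \<Psi> by (metis image_eqI)
  qed
  have nodes: "?nodes ` ?C \<subseteq> S \<rightarrow>\<^sub>E ?V" by (auto simp: node_content_def)
  have fin: "finite (S \<rightarrow>\<^sub>E ?V)" using S by (simp add: finite_PiE)
  have fin_nodes: "finite (?nodes ` ?C)" using finite_subset[OF nodes fin] .
  have "card (J \<rightarrow>\<^sub>E ?V) \<le> card (\<Psi> ` ?nodes ` ?C)"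
    using files fin_nodes by (intro card_mono) auto
  also have "\<dots> \<le> card (?nodes ` ?C)" using fin_nodes by (rule card_image_le)
  also have "\<dots> \<le> card (S \<rightarrow>\<^sub>E ?V)" using fin nodes by (rule card_mono)
  finally have "(CARD('f) ^ \<alpha>) ^ card J \<le> (CARD('f) ^ \<alpha>) ^ card S"
    using J S by (simp add: card_PiE card_carrier_vec finite_subset)
  moreover have "1 < CARD('f) ^ \<alpha>"
    using two_le_card_field[where 'f='f] \<alpha> by (intro one_less_power) auto
  ultimately show ?thesis using power_le_imp_le_exp by blast
qed

lemma latency_decodable:
  fixes G :: "'f::field mat"
  assumes "G \<in> carrier_mat (k * \<alpha>) (n * \<alpha>)" and "vec_space.rank (k * \<alpha>) G = k * \<alpha>"
  shows "decodable G k \<alpha> j {t \<in> {1..n}. \<tau> t i \<le> latency G n k \<alpha> \<tau> j i}"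
  unfolding latency_def
  using threshold_LeastI[where A = "{1..n}" and D = "decodable G k \<alpha> j" and f = "\<lambda>t. \<tau> t i"]
    decodable_from_all_nodes[OF assms] by simp

lemma card_latency_le_card_nodes_within:
  fixes G :: "'f::{field,finite} mat"
  assumes "1 \<le> \<alpha>" and G: "G \<in> carrier_mat (k * \<alpha>) (n * \<alpha>)"
    and r: "vec_space.rank (k * \<alpha>) G = k * \<alpha>"
  shows "card {j \<in> {1..k}. latency G n k \<alpha> \<tau> j i \<le> L} \<le> card {t \<in> {1..n}. \<tau> t i \<le> L}"
proof (rule card_decodable_files_le_card_nodes[OF \<open>1 \<le> \<alpha>\<close>])
  show "\<forall>j\<in>{j \<in> {1..k}. latency G n k \<alpha> \<tau> j i \<le> L}. decodable G k \<alpha> j {t \<in> {1..n}. \<tau> t i \<le> L}"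
  proof
    fix j assume "j \<in> {j \<in> {1..k}. latency G n k \<alpha> \<tau> j i \<le> L}"
    then have "{t \<in> {1..n}. \<tau> t i \<le> latency G n k \<alpha> \<tau> j i} \<subseteq> {t \<in> {1..n}. \<tau> t i \<le> L}" by auto
    then show "decodable G k \<alpha> j {t \<in> {1..n}. \<tau> t i \<le> L}"
      using decodable_mono latency_decodable[OF G r] by blast
  qed
qed auto

lemma count_latencies_le_count_rtts:
  fixes G :: "'f::{field,finite} mat"
  assumes "1 \<le> \<alpha>" and "G \<in> carrier_mat (k * \<alpha>) (n * \<alpha>)"
    and "vec_space.rank (k * \<alpha>) G = k * \<alpha>"
  shows "length (filter (\<lambda>x. x \<le> L) (map (\<lambda>j. latency G n k \<alpha> \<tau> j i) [1..<k+1]))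
    \<le> length (filter (\<lambda>x. x \<le> L) (map (\<lambda>t. \<tau> t i) [1..<n+1]))"
  unfolding length_filter_map_upt using card_latency_le_card_nodes_within[OF assms] .

lemma lam_le_L_max:
  fixes G :: "'f::{field,finite} mat"
  assumes k: "1 \<le> k" and "1 \<le> \<alpha>" and "G \<in> carrier_mat (k * \<alpha>) (n * \<alpha>)"
    and "vec_space.rank (k * \<alpha>) G = k * \<alpha>"
  shows "lam n \<tau> i (k - 1) \<le> L_max G n k \<alpha> \<tau> i"
proof -
  let ?l = "\<lambda>j. latency G n k \<alpha> \<tau> j i"
  let ?ls = "map ?l [1..<k+1]"
  have "lam n \<tau> i (k - 1) \<le> sort ?ls ! (k - 1)"
    unfolding lam_def using count_latencies_le_count_rtts[OF assms(2-)] k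
    by (intro nth_sort_mono) auto
  moreover have "sort ?ls ! (k - 1) \<in> ?l ` {1..k}"
    using nth_mem[of "k - 1" "sort ?ls"] k by auto
  then have "sort ?ls ! (k - 1) \<le> L_max G n k \<alpha> \<tau> i" unfolding L_max_def by (intro Max_ge) auto
  ultimately show ?thesis by linarith
qed

lemma sum_lam_le_sum_latency:
  fixes G :: "'f::{field,finite} mat"
  assumes "1 \<le> \<alpha>" and "G \<in> carrier_mat (k * \<alpha>) (n * \<alpha>)"
    and "vec_space.rank (k * \<alpha>) G = k * \<alpha>"
  shows "(\<Sum>j<k. lam n \<tau> i j) \<le> (\<Sum>j\<in>{1..k}. latency G n k \<alpha> \<tau> j i)"
proof -
  have "(\<Sum>j<k. lam n \<tau> i j) \<le> sum_list (map (\<lambda>j. latency G n k \<alpha> \<tau> j i) [1..<k+1])"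
    using sum_nth_sort_le_sum_list[OF count_latencies_le_count_rtts[OF assms, where \<tau> = \<tau> and i = i]]
    by (simp add: lam_def del: upt_Suc)
  also have "\<dots> = (\<Sum>j\<in>{1..k}. latency G n k \<alpha> \<tau> j i)"
    by (simp add: sum_set_upt_conv_sum_list_nat[symmetric] atLeastLessThanSuc_atLeastAtMost
        del: upt_Suc)
  finally show ?thesis .
qed

theorem proposition1:
  fixes G :: "'f::{field,finite} mat" and n k \<alpha> :: nat and \<tau> :: "nat \<Rightarrow> nat \<Rightarrow> real"
  assumes "1 \<le> k" and "k \<le> n" and "1 \<le> \<alpha>"
    and "G \<in> carrier_mat (k * \<alpha>) (n * \<alpha>)"
    and "vec_space.rank (k * \<alpha>) G = k * \<alpha>"
    and "\<And>i j. i \<in> {1..n} \<Longrightarrow> j \<in> {1..n} \<Longrightarrow> \<tau> i j = \<tau> j i"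
    and "\<And>i. i \<in> {1..n} \<Longrightarrow> \<tau> i i = 0"
    and "\<And>i j. i \<in> {1..n} \<Longrightarrow> j \<in> {1..n} \<Longrightarrow> \<tau> i j \<ge> 0"
  shows "(\<forall>i\<in>{1..n}. L_max G n k \<alpha> \<tau> i \<ge> lam n \<tau> i (k - 1))
    \<and> L_avg G n k \<alpha> \<tau> \<ge> (1 / (real k * real n)) * (\<Sum>i\<in>{1..n}. \<Sum>j<k. lam n \<tau> i j)"
proof
  show "\<forall>i\<in>{1..n}. L_max G n k \<alpha> \<tau> i \<ge> lam n \<tau> i (k - 1)"
    using lam_le_L_max[OF assms(1,3-5)] by blast
  have "(\<Sum>i\<in>{1..n}. \<Sum>j<k. lam n \<tau> i j) \<le> (\<Sum>i\<in>{1..n}. \<Sum>j\<in>{1..k}. latency G n k \<alpha> \<tau> j i)"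
    using sum_lam_le_sum_latency[OF assms(3-5)] by (rule sum_mono)
  then show "L_avg G n k \<alpha> \<tau> \<ge> (1 / (real k * real n)) * (\<Sum>i\<in>{1..n}. \<Sum>j<k. lam n \<tau> i j)"
    unfolding L_avg_def by (intro mult_left_mono) auto
qed

end
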